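(* For every $n\ge1$ and all $\Delta,\Delta'\in\mathcal{P}_n$: if for every $i\in\mathbb{Z}_n$ we have $d_\Delta(i)=d_{\Delta'}(i)\neq\mathbb{Z}_n$, then $\Delta\equiv\Delta'$.
   Context: Cells are indexed by $\mathbb{Z}_n=\{0,\dots,n-1\}$, indices modulo $n$. An update schedule is an ordered partition $\Delta=(\Delta_1,\dots,\Delta_k)$ of $\mathbb{Z}_n$ into nonempty blocks; $\mathcal{P}_n$ is the set of them. For $u,v\in\mathbb{Z}_n$ with $u\in\Delta_a$, $v\in\Delta_b$, $lab_\Delta((u,v))=\oplus$ if $b\le a$ and $\ominus$ if $a<b$. Define $d^{\leftarrow}_\Delta(i)=\max\{k\in\mathbb{N}:\forall j,\,0<j<k\Rightarrow lab_\Delta((i-j,i-j+1))=\ominus\}$, $d^{\rightarrow}_\Delta(i)=\max\{k\in\mathbb{N}:\forall j,\,0<j<k\Rightarrow lab_\Delta((i+j,i+j-1))=\ominus\}$, and $d_\Delta(i)=\{i-k \bmod n: 0\le k\le d^{\leftarrow}_\Delta(i)\}\cup\{i+k\bmod n:0\le k\le d^{\rightarrow}_\Delta(i)\}$. Two schedules are equivalent, $\Delta\equiv\Delta'$, iff $lab_\Delta$ and $lab_{\Delta'}$ agree on every arc $(i,i+1)$ and $(i+1,i)$, $i\in\mathbb{Z}_n$. *)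

theory Defs
  imports Main
begin

text \<open>Cells are 0,...,n-1 (nat); an update schedule is a list of blocks
  (list index = block position, 0-based).\<close>

definition cmod :: "nat \<Rightarrow> int \<Rightarrow> nat" where
  "cmod n x = nat (x mod int n)"

definition ordered_partitions :: "nat \<Rightarrow> nat set list set" where
  "ordered_partitions n = {D. (\<forall>a<length D. D ! a \<noteq> {})
      \<and> (\<forall>a<length D. \<forall>b<length D. a \<noteq> b \<longrightarrow> D ! a \<inter> D ! b = {})
      \<and> (\<Union>a<length D. D ! a) = {0..<n}}"

definition blk :: "nat set list \<Rightarrow> nat \<Rightarrow> nat" where
  "blk D u = (THE a. a < length D \<and> u \<in> D ! a)"

text \<open>lab D (u,v) = True means \<ominus> (u in block a, v in block b, a < b);
  False means \<oplus> (b \<le> a).\<close>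
definition lab_minus :: "nat set list \<Rightarrow> nat \<times> nat \<Rightarrow> bool" where
  "lab_minus D e = (blk D (fst e) < blk D (snd e))"

definition dleft :: "nat \<Rightarrow> nat set list \<Rightarrow> nat \<Rightarrow> nat" where
  "dleft n D i = (GREATEST k. \<forall>j. 0 < j \<and> j < k \<longrightarrow>
      lab_minus D (cmod n (int i - int j), cmod n (int i - int j + 1)))"

definition dright :: "nat \<Rightarrow> nat set list \<Rightarrow> nat \<Rightarrow> nat" where
  "dright n D i = (GREATEST k. \<forall>j. 0 < j \<and> j < k \<longrightarrow>
      lab_minus D (cmod n (int i + int j), cmod n (int i + int j - 1)))"

definition dset :: "nat \<Rightarrow> nat set list \<Rightarrow> nat \<Rightarrow> nat set" where
  "dset n D i = {cmod n (int i - int k) | k. k \<le> dleft n D i}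
              \<union> {cmod n (int i + int k) | k. k \<le> dright n D i}"

definition sched_equiv :: "nat \<Rightarrow> nat set list \<Rightarrow> nat set list \<Rightarrow> bool" where
  "sched_equiv n D D' = (\<forall>i<n.
      lab_minus D (i, cmod n (int i + 1)) = lab_minus D' (i, cmod n (int i + 1))
    \<and> lab_minus D (cmod n (int i + 1), i) = lab_minus D' (cmod n (int i + 1), i))"

end

theory Submission
  imports Defs
begin

text \<open>Around every cell \<open>i\<close> the set \<open>d\<^sub>\<Delta>(i)\<close> is the cyclic arc from \<open>i - d\<^sup>\<leftarrow>(i)\<close> to
  \<open>i + d\<^sup>\<rightarrow>(i)\<close>. Both radii are at least 1, and they are finite because the labels cannot be
  \<open>\<ominus>\<close> all the way around the ring (block indices would strictly decrease along a cycle).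
  Moreover \<open>d\<^sup>\<leftarrow>(i) \<ge> 2\<close> holds exactly when the arc \<open>(i-1, i)\<close> is labelled \<open>\<ominus>\<close>. If the arc does
  not cover the whole ring, then it contains \<open>i - 2\<close> exactly when \<open>d\<^sup>\<leftarrow>(i) \<ge> 2\<close>: otherwise
  \<open>i - 2\<close> would be reached by wrapping around from the far end. So \<open>d\<^sub>\<Delta>(i)\<close> determines the
  label of \<open>(i-1, i)\<close> and, symmetrically, of \<open>(i+1, i)\<close>.\<close>

lemma cmod_lt: "0 < n \<Longrightarrow> cmod n a < n"
  by (simp add: cmod_def nat_less_iff)

lemma cmod_of_nat: "i < n \<Longrightarrow> cmod n (int i) = i"
  by (simp add: cmod_def)

lemma cmod_eq_iff: "0 < n \<Longrightarrow> cmod n a = cmod n b \<longleftrightarrow> a mod int n = b mod int n"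
  by (simp add: cmod_def eq_nat_nat_iff)

lemma cmod_succ_pred:
  assumes "i < n"
  shows "cmod n (int (cmod n (int i + 1)) - 1) = i"
proof -
  have "int (cmod n (int i + 1)) = (int i + 1) mod int n"
    using assms by (simp add: cmod_def)
  then show ?thesis
    using assms by (simp add: cmod_def mod_diff_left_eq)
qed

definition cyclic_arc :: "nat \<Rightarrow> nat \<Rightarrow> nat \<Rightarrow> nat \<Rightarrow> nat set" where
  "cyclic_arc n i L R = (\<lambda>k. cmod n (int i + k)) ` {- int L..int R}"

lemma int_interval_split: "{- int L..int R} = (\<lambda>k. - int k) ` {..L} \<union> int ` {..R}"
proof -
  have "k \<in> (\<lambda>k. - int k) ` {..L} \<union> int ` {..R}" if "k \<in> {- int L..int R}" for k
  proof (cases "k < 0")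
    case True
    then show ?thesis
      using that by (auto intro!: image_eqI[where x = "nat (- k)"])
  next
    case False
    then show ?thesis
      using that by (auto intro!: image_eqI[where x = "nat k"])
  qed
  then show ?thesis
    by (intro equalityI subsetI) (blast, auto)
qed

lemma dset_eq_cyclic_arc: "dset n D i = cyclic_arc n i (dleft n D i) (dright n D i)"
  unfolding dset_def cyclic_arc_def int_interval_split image_Un image_image
  by auto

lemma cyclic_arc_eq_all:
  assumes "0 < n" "n \<le> L + R + 1"
  shows "cyclic_arc n i L R = {0..<n}"
proof
  show "cyclic_arc n i L R \<subseteq> {0..<n}"
    using cmod_lt[OF assms(1)] by (auto simp: cyclic_arc_def)
  show "{0..<n} \<subseteq> cyclic_arc n i L R"
  proof
    fix x assume "x \<in> {0..<n}"
    define k where "k = (int x - int i + int L) mod int n - int L"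
    have "0 \<le> (int x - int i + int L) mod int n" "(int x - int i + int L) mod int n < int n"
      using assms(1) by simp_all
    then have "k \<in> {- int L..int R}"
      unfolding k_def atLeastAtMost_iff using assms(2) by linarith
    moreover have "cmod n (int i + k) = x"
    proof -
      have "int i + k = (int i - int L) + (int x - int i + int L) mod int n"
        by (simp add: k_def)
      then have "(int i + k) mod int n = ((int i - int L) + (int x - int i + int L)) mod int n"
        by (simp only: mod_add_right_eq)
      then show ?thesis
        using \<open>x \<in> {0..<n}\<close> by (simp add: cmod_def)
    qed
    ultimately show "x \<in> cyclic_arc n i L R"
      unfolding cyclic_arc_def by force
  qed
qed

lemma cyclic_arc_wraps:
  assumes "0 < n" "cmod n (int i + a) \<in> cyclic_arc n i L R"
    and "a = - int L - 1 \<or> a = int R + 1"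
  shows "n \<le> L + R + 1"
proof -
  obtain k where k: "k \<in> {- int L..int R}" "cmod n (int i + a) = cmod n (int i + k)"
    using assms(2) by (auto simp: cyclic_arc_def)
  have "int n dvd a - k"
    using k(2) cmod_eq_iff[OF assms(1)] by (simp add: mod_eq_dvd_iff)
  then have "int n dvd \<bar>a - k\<bar>"
    by simp
  moreover have "0 < \<bar>a - k\<bar>" "\<bar>a - k\<bar> \<le> int (L + R + 1)"
    using k(1) assms(3) by auto
  ultimately show ?thesis
    using zdvd_imp_le by fastforce
qed

lemma cyclic_strict_descent_fails:
  fixes f :: "nat \<Rightarrow> 'a::order"
  assumes "0 < n" "f n = f 0"
  shows "\<exists>j>0. \<not> f j < f (j - 1)"
proof (rule ccontr)
  assume "\<not> ?thesis"
  then have descent: "f j < f (j - 1)" if "0 < j" for j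
    using that by blast
  have "f j < f 0" if "0 < j" for j
    using that
  proof (induction j)
    case (Suc j)
    then show ?case
      using descent[of "Suc j"] by (cases "j = 0") auto
  qed simp
  from this[of n] show False
    using assms by simp
qed

definition run_length :: "(nat \<Rightarrow> bool) \<Rightarrow> nat" where
  "run_length P = (GREATEST k. \<forall>j. 0 < j \<and> j < k \<longrightarrow> P j)"

lemma
  assumes "0 < j\<^sub>0" "\<not> P j\<^sub>0"
  shows run_length_ge_1: "1 \<le> run_length P"
    and run_length_ge_2_iff: "2 \<le> run_length P \<longleftrightarrow> P 1"
proof -
  let ?Q = "\<lambda>k. \<forall>j. 0 < j \<and> j < k \<longrightarrow> P j"
  have bound: "\<forall>k. ?Q k \<longrightarrow> k \<le> j\<^sub>0"
    using assms leI by blast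
  show "1 \<le> run_length P"
    unfolding run_length_def by (rule Greatest_le_nat[of ?Q 1 j\<^sub>0]) (use bound in auto)
  have "?Q (run_length P)"
    unfolding run_length_def by (rule GreatestI_nat[of ?Q 0 j\<^sub>0]) (use bound in auto)
  moreover have "2 \<le> run_length P" if "P 1"
  proof -
    have "?Q 2"
      using that by (metis One_nat_def less_2_cases not_less_zero)
    then show ?thesis
      unfolding run_length_def by (rule Greatest_le_nat) (use bound in auto)
  qed
  ultimately show "2 \<le> run_length P \<longleftrightarrow> P 1"
    by auto
qed

lemma
  assumes "0 < n"
  shows dleft_ge_1: "1 \<le> dleft n D i"
    and dleft_ge_2_iff: "2 \<le> dleft n D i \<longleftrightarrow> lab_minus D (cmod n (int i - 1), cmod n (int i))"
proof -
  define f where "f j = blk D (cmod n (int i - int j))" for j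
  have "f n = f 0"
    by (simp add: f_def cmod_def)
  then obtain j\<^sub>0 where j\<^sub>0: "0 < j\<^sub>0" "\<not> f j\<^sub>0 < f (j\<^sub>0 - 1)"
    using cyclic_strict_descent_fails assms by blast
  let ?P = "\<lambda>j. lab_minus D (cmod n (int i - int j), cmod n (int i - int j + 1))"
  have "cmod n (int i - int j\<^sub>0 + 1) = cmod n (int i - int (j\<^sub>0 - 1))"
    using j\<^sub>0(1) by (simp add: of_nat_diff algebra_simps)
  then have "\<not> ?P j\<^sub>0"
    using j\<^sub>0(2) unfolding lab_minus_def f_def by simp
  moreover have "dleft n D i = run_length ?P"
    unfolding dleft_def run_length_def ..
  ultimately show "1 \<le> dleft n D i" "2 \<le> dleft n D i \<longleftrightarrow> lab_minus D (cmod n (int i - 1), cmod n (int i))"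
    using run_length_ge_1[OF j\<^sub>0(1)] run_length_ge_2_iff[OF j\<^sub>0(1)] by simp_all
qed

lemma
  assumes "0 < n"
  shows dright_ge_1: "1 \<le> dright n D i"
    and dright_ge_2_iff: "2 \<le> dright n D i \<longleftrightarrow> lab_minus D (cmod n (int i + 1), cmod n (int i))"
proof -
  define f where "f j = blk D (cmod n (int i + int j))" for j
  have "f n = f 0"
    by (simp add: f_def cmod_def)
  then obtain j\<^sub>0 where j\<^sub>0: "0 < j\<^sub>0" "\<not> f j\<^sub>0 < f (j\<^sub>0 - 1)"
    using cyclic_strict_descent_fails assms by blast
  let ?P = "\<lambda>j. lab_minus D (cmod n (int i + int j), cmod n (int i + int j - 1))"
  have "cmod n (int i + int j\<^sub>0 - 1) = cmod n (int i + int (j\<^sub>0 - 1))"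
    using j\<^sub>0(1) by (simp add: of_nat_diff algebra_simps)
  then have "\<not> ?P j\<^sub>0"
    using j\<^sub>0(2) unfolding lab_minus_def f_def by simp
  moreover have "dright n D i = run_length ?P"
    unfolding dright_def run_length_def ..
  ultimately show "1 \<le> dright n D i" "2 \<le> dright n D i \<longleftrightarrow> lab_minus D (cmod n (int i + 1), cmod n (int i))"
    using run_length_ge_1[OF j\<^sub>0(1)] run_length_ge_2_iff[OF j\<^sub>0(1)] by simp_all
qed

lemma lab_minus_left_iff_dset:
  assumes "0 < n" "dset n D i \<noteq> {0..<n}"
  shows "lab_minus D (cmod n (int i - 1), cmod n (int i)) \<longleftrightarrow> cmod n (int i - 2) \<in> dset n D i"
proof
  assume "lab_minus D (cmod n (int i - 1), cmod n (int i))"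
  then have "- 2 \<in> {- int (dleft n D i)..int (dright n D i)}"
    using dleft_ge_2_iff[OF assms(1)] by simp
  then show "cmod n (int i - 2) \<in> dset n D i"
    unfolding dset_eq_cyclic_arc cyclic_arc_def by (force intro: image_eqI[where x = "- 2"])
next
  assume wrapped: "cmod n (int i - 2) \<in> dset n D i"
  show "lab_minus D (cmod n (int i - 1), cmod n (int i))"
  proof (rule ccontr)
    assume "\<not> ?thesis"
    then have "dleft n D i = 1"
      using dleft_ge_1[OF assms(1), of D i] dleft_ge_2_iff[OF assms(1), of D i] by simp
    then have "n \<le> dleft n D i + dright n D i + 1"
      using cyclic_arc_wraps[OF assms(1), of i "- 2"] wrapped by (simp add: dset_eq_cyclic_arc)
    then show False
      using cyclic_arc_eq_all[OF assms(1)] assms(2) by (simp add: dset_eq_cyclic_arc)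
  qed
qed

lemma lab_minus_right_iff_dset:
  assumes "0 < n" "dset n D i \<noteq> {0..<n}"
  shows "lab_minus D (cmod n (int i + 1), cmod n (int i)) \<longleftrightarrow> cmod n (int i + 2) \<in> dset n D i"
proof
  assume "lab_minus D (cmod n (int i + 1), cmod n (int i))"
  then have "2 \<in> {- int (dleft n D i)..int (dright n D i)}"
    using dright_ge_2_iff[OF assms(1)] by simp
  then show "cmod n (int i + 2) \<in> dset n D i"
    unfolding dset_eq_cyclic_arc cyclic_arc_def by (force intro: image_eqI[where x = 2])
next
  assume wrapped: "cmod n (int i + 2) \<in> dset n D i"
  show "lab_minus D (cmod n (int i + 1), cmod n (int i))"
  proof (rule ccontr)
    assume "\<not> ?thesis"
    then have "dright n D i = 1"
      using dright_ge_1[OF assms(1), of D i] dright_ge_2_iff[OF assms(1), of D i] by simp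
    then have "n \<le> dleft n D i + dright n D i + 1"
      using cyclic_arc_wraps[OF assms(1), of i 2] wrapped by (simp add: dset_eq_cyclic_arc)
    then show False
      using cyclic_arc_eq_all[OF assms(1)] assms(2) by (simp add: dset_eq_cyclic_arc)
  qed
qed

theorem mainTheorem11:
  fixes n :: nat and D D' :: "nat set list"
  assumes "n \<ge> 1"
    and "D \<in> ordered_partitions n" and "D' \<in> ordered_partitions n"
    and "\<forall>i<n. dset n D i = dset n D' i \<and> dset n D i \<noteq> {0..<n}"
  shows "sched_equiv n D D'"
  unfolding sched_equiv_def
proof (intro allI impI conjI)
  fix i assume "i < n"
  have "0 < n"
    using assms(1) by simp
  have same_dset: "dset n D' j = dset n D j" "dset n D j \<noteq> {0..<n}" if "j < n" for j
    using assms(4) that by auto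
  have left: "lab_minus D (cmod n (int j - 1), cmod n (int j)) = lab_minus D' (cmod n (int j - 1), cmod n (int j))"
    if "j < n" for j
    using lab_minus_left_iff_dset[OF \<open>0 < n\<close>, of D j] lab_minus_left_iff_dset[OF \<open>0 < n\<close>, of D' j]
      same_dset[OF that] by simp
  have right: "lab_minus D (cmod n (int j + 1), cmod n (int j)) = lab_minus D' (cmod n (int j + 1), cmod n (int j))"
    if "j < n" for j
    using lab_minus_right_iff_dset[OF \<open>0 < n\<close>, of D j] lab_minus_right_iff_dset[OF \<open>0 < n\<close>, of D' j]
      same_dset[OF that] by simp
  have "cmod n (int i + 1) < n"
    using cmod_lt[OF \<open>0 < n\<close>] .
  from left[OF this] show "lab_minus D (i, cmod n (int i + 1)) = lab_minus D' (i, cmod n (int i + 1))"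
    by (simp only: cmod_succ_pred[OF \<open>i < n\<close>] cmod_of_nat[OF \<open>cmod n (int i + 1) < n\<close>])
  from right[OF \<open>i < n\<close>] show "lab_minus D (cmod n (int i + 1), i) = lab_minus D' (cmod n (int i + 1), i)"
    by (simp only: cmod_of_nat[OF \<open>i < n\<close>])
qed

end
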